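(* Let $N\ge 1$, $c\in\mathbb{R}$, and consider the manifold of Jacobi parameters $a_1,\dots,a_{N-1}>0$, $b_1,\dots,b_N\in\mathbb{R}$ with $\sum_{j=1}^N b_j=c$, with the Poisson bracket described in the context. Let $P_n$ and $Q_n$ be the first and second kind monic polynomials defined in the context. Then for every $n=1,\dots,N$ and all $x,y$, \[ \{P_n(x),P_n(y)\}=\{Q_n(x),Q_n(y)\}=0, \] \[ 2\{P_n(x),Q_n(y)\} = -\frac{P_n(x)Q_n(y)-P_n(y)Q_n(x)}{x-y} + Q_n(x)Q_n(y). \]
   Context: The Poisson bracket on functions of $(a_1,\dots,a_{N-1},b_1,\dots,b_N)$ is the bilinear antisymmetric bracket satisfying the Leibniz rule whose only nonzero brackets among the coordinates are $\{b_k,a_k\}=-\tfrac14 a_k$ for $k=1,\dots,N-1$ and $\{b_k,a_{k-1}\}=\tfrac14 a_{k-1}$ for $k=2,\dots,N$. Brackets of functions depending on auxiliary variables $x,y$ are computed with $x,y$ held fixed. For $b_1,\dots,b_m$ and $a_1,\dots,a_{m-1}$ let $J(b_1,\dots,b_m;a_1,\dots,a_{m-1})$ be the $m\times m$ tridiagonal symmetric matrix with diagonal $b_1,\dots,b_m$ and off-diagonal entries $a_1,\dots,a_{m-1}$. Then $P_n(x)=\det\bigl(x-J(b_1,\dots,b_n;a_1,\dots,a_{n-1})\bigr)$ and $Q_n(x)=\det\bigl(x-J(b_2,\dots,b_n;a_2,\dots,a_{n-1})\bigr)$ (so $Q_1=1$). *)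

theory Defs
  imports Complex_Main "Jordan_Normal_Form.Determinant"
begin

text \<open>Coordinates: a, b :: nat => real, with a k the k-th off-diagonal Jacobi
parameter (k = 1..N-1) and b k the k-th diagonal one (k = 1..N).\<close>

definition jacobi_mat :: "nat \<Rightarrow> nat \<Rightarrow> (nat \<Rightarrow> real) \<Rightarrow> (nat \<Rightarrow> real) \<Rightarrow> real mat" where
  "jacobi_mat s m a b = mat m m (\<lambda>(i, j).
     if i = j then b (s + i + 1)
     else if i + 1 = j \<or> j + 1 = i then a (s + min i j + 1)
     else 0)"

definition jacobi_charpoly :: "nat \<Rightarrow> nat \<Rightarrow> (nat \<Rightarrow> real) \<Rightarrow> (nat \<Rightarrow> real) \<Rightarrow> real \<Rightarrow> real" where
  "jacobi_charpoly s m a b x = det (x \<cdot>\<^sub>m 1\<^sub>m m - jacobi_mat s m a b)"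

definition P_poly :: "nat \<Rightarrow> (nat \<Rightarrow> real) \<Rightarrow> (nat \<Rightarrow> real) \<Rightarrow> real \<Rightarrow> real" where
  "P_poly n a b x = jacobi_charpoly 0 n a b x"

definition Q_poly :: "nat \<Rightarrow> (nat \<Rightarrow> real) \<Rightarrow> (nat \<Rightarrow> real) \<Rightarrow> real \<Rightarrow> real" where
  "Q_poly n a b x = jacobi_charpoly 1 (n - 1) a b x"

definition rderiv :: "(real \<Rightarrow> real) \<Rightarrow> real \<Rightarrow> real" where
  "rderiv f x = (SOME D. (f has_real_derivative D) (at x))"

definition pd_a :: "nat \<Rightarrow> ((nat \<Rightarrow> real) \<Rightarrow> (nat \<Rightarrow> real) \<Rightarrow> real) \<Rightarrow> (nat \<Rightarrow> real) \<Rightarrow> (nat \<Rightarrow> real) \<Rightarrow> real" where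
  "pd_a k F a b = rderiv (\<lambda>t. F (a(k := t)) b) (a k)"

definition pd_b :: "nat \<Rightarrow> ((nat \<Rightarrow> real) \<Rightarrow> (nat \<Rightarrow> real) \<Rightarrow> real) \<Rightarrow> (nat \<Rightarrow> real) \<Rightarrow> (nat \<Rightarrow> real) \<Rightarrow> real" where
  "pd_b k F a b = rderiv (\<lambda>t. F a (b(k := t))) (b k)"

text \<open>The Poisson bracket determined (bilinearity, antisymmetry, Leibniz) by
 {b_k, a_k} = -a_k/4 (k=1..N-1), {b_k, a_{k-1}} = a_{k-1}/4 (k=2..N), all other
 coordinate brackets zero:  {F,G} = sum_{i,j} dF/dz_i dG/dz_j {z_i,z_j}.\<close>
definition poisson :: "nat \<Rightarrow> ((nat \<Rightarrow> real) \<Rightarrow> (nat \<Rightarrow> real) \<Rightarrow> real) \<Rightarrow> ((nat \<Rightarrow> real) \<Rightarrow> (nat \<Rightarrow> real) \<Rightarrow> real) \<Rightarrow> (nat \<Rightarrow> real) \<Rightarrow> (nat \<Rightarrow> real) \<Rightarrow> real" where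
  "poisson N F G a b =
     (\<Sum>k=1..N-1. (- a k / 4) * (pd_b k F a b * pd_a k G a b - pd_a k F a b * pd_b k G a b))
   + (\<Sum>k=2..N. (a (k-1) / 4) * (pd_b k F a b * pd_a (k-1) G a b - pd_a (k-1) F a b * pd_b k G a b))"

end

theory Submission
  imports Defs
begin

(* Write P_s^m(x) = jacobi_charpoly s m a b x for the characteristic polynomial of the block with
   diagonal b_(s+1), ..., b_(s+m). Expanding along the first row gives
     P_s^(m+2)(x) = (x - b_(s+1)) P_(s+1)^(m+1)(x) - a_(s+1)^2 P_(s+2)^m(x),
   and the inner polynomials do not involve a_s, a_(s+1), b_(s+1). By the Leibniz rule the only new
   brackets are therefore {b_(s+1), a_(s+1)} = -a_(s+1)/4 and
   {a_(s+1), P_(s+1)^(m+1)(y)} = a_(s+1)/4 P_(s+2)^m(y), the latter because P_(s+1)^(m+1) is affine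
   in b_(s+2) with slope -P_(s+2)^m. So both identities for the block starting at s follow from those
   for the blocks starting at s+1 and s+2, by a simultaneous induction on the size. In the commutation
   step the mixed identity at (x,y) and at (y,x) shows that {P_(s+1)(x), P_(s+2)(y)} is symmetric in
   x and y, which makes the remaining terms cancel. *)

abbreviation char_mat :: "nat \<Rightarrow> nat \<Rightarrow> (nat \<Rightarrow> real) \<Rightarrow> (nat \<Rightarrow> real) \<Rightarrow> real \<Rightarrow> real mat" where
  "char_mat s m a b x \<equiv> x \<cdot>\<^sub>m 1\<^sub>m m - jacobi_mat s m a b"

lemma char_mat_carrier: "char_mat s m a b x \<in> carrier_mat m m"
  by (rule carrier_matI) (simp_all add: jacobi_mat_def)

lemma char_mat_index:
  assumes "i < m" "j < m"
  shows "char_mat s m a b x $$ (i, j) =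
    (if i = j then x - b (s + i + 1)
     else if i + 1 = j \<or> j + 1 = i then - a (s + min i j + 1) else 0)"
  using assms by (simp add: jacobi_mat_def)

lemma mat_delete_char_mat_0_0: "mat_delete (char_mat s (Suc m) a b x) 0 0 = char_mat (Suc s) m a b x"
  by (rule eq_matI) (auto simp: mat_delete_def char_mat_index jacobi_mat_def)

lemma mat_delete_0_1_0_0: "mat_delete (mat_delete A 0 1) 0 0 = mat_delete (mat_delete A 0 0) 0 0"
  by (rule eq_matI) (auto simp: mat_delete_def)

lemma jacobi_charpoly_0: "jacobi_charpoly s 0 a b x = 1"
proof -
  have "char_mat s 0 a b x = 1\<^sub>m 0"
    by (rule eq_matI) (auto simp: jacobi_mat_def)
  then show ?thesis by (simp add: jacobi_charpoly_def)
qed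

lemma jacobi_charpoly_1: "jacobi_charpoly s (Suc 0) a b x = x - b (Suc s)"
proof -
  have "char_mat s (Suc 0) a b x = mat 1 1 (\<lambda>_. x - b (Suc s))"
    by (rule eq_matI) (auto simp: jacobi_mat_def)
  then show ?thesis by (simp add: jacobi_charpoly_def det_single)
qed

lemma jacobi_charpoly_Suc_Suc:
  "jacobi_charpoly s (Suc (Suc m)) a b x =
     (x - b (Suc s)) * jacobi_charpoly (Suc s) (Suc m) a b x
     - (a (Suc s))\<^sup>2 * jacobi_charpoly (Suc (Suc s)) m a b x"
proof -
  define A where "A = char_mat s (Suc (Suc m)) a b x"
  define B where "B = mat_delete A 0 1"
  have B_carrier: "B \<in> carrier_mat (Suc m) (Suc m)"
    by (rule carrier_matI) (simp_all add: B_def A_def jacobi_mat_def)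
  have B_col_0: "B $$ (i, 0) = (if i = 0 then - a (Suc s) else 0)" if "i < Suc m" for i
    using that by (simp add: B_def A_def mat_delete_def jacobi_mat_def)
  have cofactor_B: "cofactor B 0 0 = jacobi_charpoly (Suc (Suc s)) m a b x"
    unfolding cofactor_def B_def mat_delete_0_1_0_0 A_def
    by (simp add: mat_delete_char_mat_0_0 jacobi_charpoly_def)
  have "det B = (\<Sum>i<Suc m. B $$ (i, 0) * cofactor B i 0)"
    by (rule laplace_expansion_column[OF B_carrier]) simp
  also have "\<dots> = (\<Sum>i\<in>{0}. B $$ (i, 0) * cofactor B i 0)"
    by (rule sum.mono_neutral_right) (auto simp: B_col_0)
  also have "\<dots> = - a (Suc s) * jacobi_charpoly (Suc (Suc s)) m a b x"
    using cofactor_B by (simp add: B_col_0)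
  finally have det_B: "det B = \<dots>" .
  have "det A = (\<Sum>j<Suc (Suc m). A $$ (0, j) * cofactor A 0 j)"
    by (rule laplace_expansion_row) (simp_all add: A_def char_mat_carrier)
  also have "\<dots> = (\<Sum>j\<in>{0, 1}. A $$ (0, j) * cofactor A 0 j)"
    by (rule sum.mono_neutral_right) (auto simp: A_def char_mat_index)
  also have "\<dots> = (x - b (Suc s)) * jacobi_charpoly (Suc s) (Suc m) a b x
      - (a (Suc s))\<^sup>2 * jacobi_charpoly (Suc (Suc s)) m a b x"
    using det_B by (simp add: A_def char_mat_index cofactor_def mat_delete_char_mat_0_0
        jacobi_charpoly_def B_def power2_eq_square)
  finally show ?thesis by (simp add: A_def jacobi_charpoly_def)
qed

lemma jacobi_mat_upd_a:
  "k \<le> s \<or> s + m \<le> k \<Longrightarrow> jacobi_mat s m (a(k := t)) b = jacobi_mat s m a b"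
  by (rule eq_matI) (auto simp: jacobi_mat_def)

lemma jacobi_mat_upd_b:
  "k \<le> s \<or> s + m < k \<Longrightarrow> jacobi_mat s m a (b(k := t)) = jacobi_mat s m a b"
  by (rule eq_matI) (auto simp: jacobi_mat_def)

lemma jacobi_charpoly_upd_a:
  "k \<le> s \<or> s + m \<le> k \<Longrightarrow> jacobi_charpoly s m (a(k := t)) b x = jacobi_charpoly s m a b x"
  by (simp add: jacobi_charpoly_def jacobi_mat_upd_a)

lemma jacobi_charpoly_upd_b:
  "k \<le> s \<or> s + m < k \<Longrightarrow> jacobi_charpoly s m a (b(k := t)) x = jacobi_charpoly s m a b x"
  by (simp add: jacobi_charpoly_def jacobi_mat_upd_b)

lemma jacobi_charpoly_upd_first_b:
  "jacobi_charpoly s (Suc m) a (b(Suc s := t)) x =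
     jacobi_charpoly s (Suc m) a b x - (t - b (Suc s)) * jacobi_charpoly (Suc s) m a b x"
  by (cases m) (simp_all add: jacobi_charpoly_0 jacobi_charpoly_1 jacobi_charpoly_Suc_Suc
      jacobi_charpoly_upd_b algebra_simps)

type_synonym phase_fun = "(nat \<Rightarrow> real) \<Rightarrow> (nat \<Rightarrow> real) \<Rightarrow> real"

lemma rderiv_eqI: "(f has_real_derivative D) (at x) \<Longrightarrow> rderiv f x = D"
  unfolding rderiv_def by (blast intro: DERIV_unique)

lemma has_real_derivative_rderiv:
  "f differentiable (at x) \<Longrightarrow> (f has_real_derivative rderiv f x) (at x)"
  unfolding rderiv_def real_differentiable_def by (rule someI_ex)

definition partially_differentiable :: "phase_fun \<Rightarrow> (nat \<Rightarrow> real) \<Rightarrow> (nat \<Rightarrow> real) \<Rightarrow> bool" where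
  "partially_differentiable F a b \<longleftrightarrow>
     (\<forall>k. (\<lambda>t. F (a(k := t)) b) differentiable (at (a k))
        \<and> (\<lambda>t. F a (b(k := t))) differentiable (at (b k)))"

lemma partially_differentiable_const: "partially_differentiable (\<lambda>a b. c) a b"
  by (simp add: partially_differentiable_def)

lemma fun_upd_apply_differentiable: "(\<lambda>t. (f(k := t)) j) differentiable F"
  by (cases "k = j") simp_all

lemma partially_differentiable_coord_a: "partially_differentiable (\<lambda>a b. a j) a b"
  unfolding partially_differentiable_def by (simp add: fun_upd_apply_differentiable del: fun_upd_apply)

lemma partially_differentiable_coord_b: "partially_differentiable (\<lambda>a b. b j) a b"
  unfolding partially_differentiable_def by (simp add: fun_upd_apply_differentiable del: fun_upd_apply)

lemma partially_differentiable_mult: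
  "partially_differentiable F a b \<Longrightarrow> partially_differentiable G a b \<Longrightarrow>
     partially_differentiable (\<lambda>a b. F a b * G a b) a b"
  by (simp add: partially_differentiable_def)

lemma partially_differentiable_diff:
  "partially_differentiable F a b \<Longrightarrow> partially_differentiable G a b \<Longrightarrow>
     partially_differentiable (\<lambda>a b. F a b - G a b) a b"
  by (simp add: partially_differentiable_def)

lemma has_real_derivative_pd_a:
  "partially_differentiable F a b \<Longrightarrow>
    ((\<lambda>t. F (a(k := t)) b) has_real_derivative pd_a k F a b) (at (a k))"
  unfolding partially_differentiable_def pd_a_def by (blast intro: has_real_derivative_rderiv)

lemma has_real_derivative_pd_b:
  "partially_differentiable F a b \<Longrightarrow>
    ((\<lambda>t. F a (b(k := t))) has_real_derivative pd_b k F a b) (at (b k))"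
  unfolding partially_differentiable_def pd_b_def by (blast intro: has_real_derivative_rderiv)

lemma pd_a_mult:
  assumes "partially_differentiable F a b" "partially_differentiable G a b"
  shows "pd_a k (\<lambda>a b. F a b * G a b) a b = F a b * pd_a k G a b + G a b * pd_a k F a b"
  unfolding pd_a_def[of k "\<lambda>a b. F a b * G a b"]
  by (rule rderiv_eqI, rule DERIV_cong[OF DERIV_mult[OF has_real_derivative_pd_a[OF assms(1)]
        has_real_derivative_pd_a[OF assms(2)]]]) (simp add: algebra_simps)

lemma pd_b_mult:
  assumes "partially_differentiable F a b" "partially_differentiable G a b"
  shows "pd_b k (\<lambda>a b. F a b * G a b) a b = F a b * pd_b k G a b + G a b * pd_b k F a b"
  unfolding pd_b_def[of k "\<lambda>a b. F a b * G a b"]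
  by (rule rderiv_eqI, rule DERIV_cong[OF DERIV_mult[OF has_real_derivative_pd_b[OF assms(1)]
        has_real_derivative_pd_b[OF assms(2)]]]) (simp add: algebra_simps)

lemma pd_a_diff:
  assumes "partially_differentiable F a b" "partially_differentiable G a b"
  shows "pd_a k (\<lambda>a b. F a b - G a b) a b = pd_a k F a b - pd_a k G a b"
  unfolding pd_a_def[of k "\<lambda>a b. F a b - G a b"]
  by (rule rderiv_eqI,
      rule DERIV_diff[OF has_real_derivative_pd_a[OF assms(1)] has_real_derivative_pd_a[OF assms(2)]])

lemma pd_b_diff:
  assumes "partially_differentiable F a b" "partially_differentiable G a b"
  shows "pd_b k (\<lambda>a b. F a b - G a b) a b = pd_b k F a b - pd_b k G a b"
  unfolding pd_b_def[of k "\<lambda>a b. F a b - G a b"]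
  by (rule rderiv_eqI,
      rule DERIV_diff[OF has_real_derivative_pd_b[OF assms(1)] has_real_derivative_pd_b[OF assms(2)]])

lemma pd_a_eq_0: "(\<And>t. F (a(k := t)) b = F a b) \<Longrightarrow> pd_a k F a b = 0"
  by (simp add: pd_a_def rderiv_eqI)

lemma pd_b_eq_0: "(\<And>t. F a (b(k := t)) = F a b) \<Longrightarrow> pd_b k F a b = 0"
  by (simp add: pd_b_def rderiv_eqI)

lemma pd_a_coord_a: "pd_a k (\<lambda>a b. a j) a b = (if k = j then 1 else 0)"
  by (cases "k = j") (simp_all add: pd_a_def rderiv_eqI)

lemma pd_b_coord_b: "pd_b k (\<lambda>a b. b j) a b = (if k = j then 1 else 0)"
  by (cases "k = j") (simp_all add: pd_b_def rderiv_eqI)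

lemma poisson_linear_left:
  assumes "\<And>k. pd_a k F a b = u * pd_a k G a b + v * pd_a k G' a b"
    and "\<And>k. pd_b k F a b = u * pd_b k G a b + v * pd_b k G' a b"
  shows "poisson N F H a b = u * poisson N G H a b + v * poisson N G' H a b"
  unfolding poisson_def assms
  by (simp add: algebra_simps sum.distrib sum_distrib_left sum_subtractf)

lemma poisson_mult_left:
  assumes "partially_differentiable F a b" "partially_differentiable G a b"
  shows "poisson N (\<lambda>a b. F a b * G a b) H a b =
    F a b * poisson N G H a b + G a b * poisson N F H a b"
  using assms by (intro poisson_linear_left) (simp_all add: pd_a_mult pd_b_mult)

lemma poisson_diff_left:
  assumes "partially_differentiable F a b" "partially_differentiable G a b"
  shows "poisson N (\<lambda>a b. F a b - G a b) H a b = poisson N F H a b - poisson N G H a b"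
proof -
  have "poisson N (\<lambda>a b. F a b - G a b) H a b = 1 * poisson N F H a b + (- 1) * poisson N G H a b"
    using assms by (intro poisson_linear_left) (simp_all add: pd_a_diff pd_b_diff)
  then show ?thesis by simp
qed

lemma poisson_const_left: "poisson N (\<lambda>a b. c) H a b = 0"
  by (simp add: poisson_def pd_a_eq_0 pd_b_eq_0)

lemma poisson_antisym: "poisson N F G a b = - poisson N G F a b"
  by (simp add: poisson_def sum_negf[symmetric] algebra_simps)

lemma poisson_self: "poisson N F F a b = 0"
  using poisson_antisym[of N F F a b] by simp

lemma poisson_coord_a_left:
  assumes "0 < j" "j < N"
  shows "poisson N (\<lambda>a b. a j) H a b = a j / 4 * (pd_b j H a b - pd_b (Suc j) H a b)"
proof -
  have "poisson N (\<lambda>a b. a j) H a b =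
      (\<Sum>k=1..N-1. if k = j then a j / 4 * pd_b j H a b else 0)
      + (\<Sum>k=2..N. if k = Suc j then - (a j / 4 * pd_b (Suc j) H a b) else 0)"
    unfolding poisson_def
    by (intro arg_cong2[where f = "(+)"] sum.cong) (auto simp: pd_b_eq_0 pd_a_coord_a)
  also have "\<dots> = a j / 4 * (pd_b j H a b - pd_b (Suc j) H a b)"
    using assms by (simp add: algebra_simps)
  finally show ?thesis .
qed

lemma poisson_coord_b_left:
  assumes "0 < j" "j < N" "pd_a (j - 1) H a b = 0"
  shows "poisson N (\<lambda>a b. b j) H a b = - (a j / 4 * pd_a j H a b)"
proof -
  have "poisson N (\<lambda>a b. b j) H a b =
      (\<Sum>k=1..N-1. if k = j then - (a j / 4 * pd_a j H a b) else 0) + (\<Sum>k=2..N. 0)"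
    unfolding poisson_def
    using assms(3) by (intro arg_cong2[where f = "(+)"] sum.cong) (auto simp: pd_a_eq_0 pd_b_coord_b)
  also have "\<dots> = - (a j / 4 * pd_a j H a b)"
    using assms by simp
  finally show ?thesis .
qed

abbreviation jacobi_fun :: "nat \<Rightarrow> nat \<Rightarrow> real \<Rightarrow> phase_fun" where
  "jacobi_fun s m x \<equiv> \<lambda>a b. jacobi_charpoly s m a b x"

lemma partially_differentiable_jacobi: "partially_differentiable (jacobi_fun s m x) a b"
proof (induction m arbitrary: s rule: induct_nat_012)
  case 0
  show ?case by (simp add: jacobi_charpoly_0 partially_differentiable_const)
next
  case 1
  show ?case
    by (simp add: jacobi_charpoly_1 partially_differentiable_diff partially_differentiable_const
        partially_differentiable_coord_b)
next
  case (ge2 m)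
  show ?case
    unfolding jacobi_charpoly_Suc_Suc power2_eq_square
    by (intro partially_differentiable_diff partially_differentiable_mult ge2.IH
        partially_differentiable_const partially_differentiable_coord_a partially_differentiable_coord_b)
qed

lemma pd_a_jacobi_eq_0: "k \<le> s \<or> s + m \<le> k \<Longrightarrow> pd_a k (jacobi_fun s m x) a b = 0"
  by (simp add: pd_a_eq_0 jacobi_charpoly_upd_a)

lemma pd_b_jacobi_eq_0: "k \<le> s \<or> s + m < k \<Longrightarrow> pd_b k (jacobi_fun s m x) a b = 0"
  by (simp add: pd_b_eq_0 jacobi_charpoly_upd_b)

lemma pd_b_jacobi_first: "pd_b (Suc s) (jacobi_fun s (Suc m) x) a b = - jacobi_charpoly (Suc s) m a b x"
  unfolding pd_b_def jacobi_charpoly_upd_first_b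
  by (rule rderiv_eqI) (auto intro!: derivative_eq_intros)

lemma poisson_coord_b_jacobi:
  assumes "0 < j" "j < N" "j \<le> s"
  shows "poisson N (\<lambda>a b. b j) (jacobi_fun s m y) a b = 0"
proof -
  have "pd_a k (jacobi_fun s m y) a b = 0" if "k \<le> s" for k
    using that by (simp add: pd_a_jacobi_eq_0)
  then show ?thesis
    using assms by (simp add: poisson_coord_b_left)
qed

lemma poisson_coord_a_jacobi:
  "0 < j \<Longrightarrow> j < N \<Longrightarrow> Suc j \<le> s \<Longrightarrow> poisson N (\<lambda>a b. a j) (jacobi_fun s m y) a b = 0"
  by (simp add: poisson_coord_a_left pd_b_jacobi_eq_0)

lemma poisson_coord_a_jacobi_first:
  "0 < j \<Longrightarrow> j < N \<Longrightarrow>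
    poisson N (\<lambda>a b. a j) (jacobi_fun j (Suc m) y) a b = a j / 4 * jacobi_charpoly (Suc j) m a b y"
  by (simp add: poisson_coord_a_left pd_b_jacobi_eq_0 pd_b_jacobi_first)

lemma poisson_coord_b_a:
  "0 < j \<Longrightarrow> j < N \<Longrightarrow> poisson N (\<lambda>a b. b j) (\<lambda>a b. a j) a b = - (a j / 4)"
  by (simp add: poisson_coord_b_left pd_a_coord_a)

lemma poisson_jacobi_Suc_Suc_left:
  "poisson N (jacobi_fun s (Suc (Suc m)) x) H a b =
     (x - b (Suc s)) * poisson N (jacobi_fun (Suc s) (Suc m) x) H a b
     - jacobi_charpoly (Suc s) (Suc m) a b x * poisson N (\<lambda>a b. b (Suc s)) H a b
     - (a (Suc s))\<^sup>2 * poisson N (jacobi_fun (Suc (Suc s)) m x) H a b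
     - 2 * a (Suc s) * jacobi_charpoly (Suc (Suc s)) m a b x * poisson N (\<lambda>a b. a (Suc s)) H a b"
  unfolding jacobi_charpoly_Suc_Suc power2_eq_square
  by (simp add: poisson_diff_left poisson_mult_left poisson_const_left partially_differentiable_jacobi
      partially_differentiable_diff partially_differentiable_mult partially_differentiable_const
      partially_differentiable_coord_a partially_differentiable_coord_b)

lemma poisson_jacobi_Suc_Suc_coord_b:
  assumes "Suc s < N"
  shows "poisson N (jacobi_fun s (Suc (Suc m)) y) (\<lambda>a b. b (Suc s)) a b =
    - ((a (Suc s))\<^sup>2 / 2 * jacobi_charpoly (Suc (Suc s)) m a b y)"
  using assms poisson_antisym[of N "jacobi_fun (Suc s) (Suc m) y" "\<lambda>a b. b (Suc s)" a b]
    poisson_antisym[of N "jacobi_fun (Suc (Suc s)) m y" "\<lambda>a b. b (Suc s)" a b]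
    poisson_antisym[of N "\<lambda>a b. a (Suc s)" "\<lambda>a b. b (Suc s)" a b]
  by (simp add: poisson_jacobi_Suc_Suc_left poisson_coord_b_jacobi poisson_coord_b_a poisson_self
      power2_eq_square)

lemma poisson_jacobi_Suc_Suc_coord_a:
  assumes "Suc s < N"
  shows "poisson N (jacobi_fun s (Suc (Suc m)) y) (\<lambda>a b. a (Suc s)) a b =
    a (Suc s) / 4 * (jacobi_charpoly (Suc s) (Suc m) a b y
      - (y - b (Suc s)) * jacobi_charpoly (Suc (Suc s)) m a b y)"
  using assms poisson_antisym[of N "jacobi_fun (Suc s) (Suc m) y" "\<lambda>a b. a (Suc s)" a b]
    poisson_antisym[of N "jacobi_fun (Suc (Suc s)) m y" "\<lambda>a b. a (Suc s)" a b]
  by (simp add: poisson_jacobi_Suc_Suc_left poisson_coord_a_jacobi_first poisson_coord_a_jacobi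
      poisson_coord_b_a poisson_self field_simps)

lemma poisson_jacobi_Suc_Suc_next:
  assumes "Suc s < N"
    and "poisson N (jacobi_fun (Suc s) (Suc m) x) (jacobi_fun (Suc s) (Suc m) y) a b = 0"
  shows "poisson N (jacobi_fun s (Suc (Suc m)) x) (jacobi_fun (Suc s) (Suc m) y) a b =
    (a (Suc s))\<^sup>2 * poisson N (jacobi_fun (Suc s) (Suc m) y) (jacobi_fun (Suc (Suc s)) m x) a b
    - (a (Suc s))\<^sup>2 / 2 * jacobi_charpoly (Suc (Suc s)) m a b x * jacobi_charpoly (Suc (Suc s)) m a b y"
  using assms poisson_antisym[of N "jacobi_fun (Suc (Suc s)) m x" "jacobi_fun (Suc s) (Suc m) y" a b]
  by (simp add: poisson_jacobi_Suc_Suc_left poisson_coord_b_jacobi poisson_coord_a_jacobi_first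
      power2_eq_square)

lemma poisson_jacobi_mixed_step:
  assumes "Suc s < N"
    and p_commute: "\<And>x y. poisson N (jacobi_fun (Suc s) (Suc m) x) (jacobi_fun (Suc s) (Suc m) y) a b = 0"
    and pq_mixed: "\<And>x y. 2 * (x - y) * poisson N (jacobi_fun (Suc s) (Suc m) x) (jacobi_fun (Suc (Suc s)) m y) a b =
      - (jacobi_charpoly (Suc s) (Suc m) a b x * jacobi_charpoly (Suc (Suc s)) m a b y
         - jacobi_charpoly (Suc s) (Suc m) a b y * jacobi_charpoly (Suc (Suc s)) m a b x)
      + (x - y) * jacobi_charpoly (Suc (Suc s)) m a b x * jacobi_charpoly (Suc (Suc s)) m a b y"
  shows "2 * (x - y) * poisson N (jacobi_fun s (Suc (Suc m)) x) (jacobi_fun (Suc s) (Suc m) y) a b =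
      - (jacobi_charpoly s (Suc (Suc m)) a b x * jacobi_charpoly (Suc s) (Suc m) a b y
         - jacobi_charpoly s (Suc (Suc m)) a b y * jacobi_charpoly (Suc s) (Suc m) a b x)
      + (x - y) * jacobi_charpoly (Suc s) (Suc m) a b x * jacobi_charpoly (Suc s) (Suc m) a b y"
proof -
  let ?q = "jacobi_charpoly (Suc (Suc s)) m a b" and ?\<alpha> = "a (Suc s)"
  define L where "L = poisson N (jacobi_fun (Suc s) (Suc m) y) (jacobi_fun (Suc (Suc s)) m x) a b"
  have "2 * (x - y) * poisson N (jacobi_fun s (Suc (Suc m)) x) (jacobi_fun (Suc s) (Suc m) y) a b =
      - ?\<alpha>\<^sup>2 * (2 * (y - x) * L) - (x - y) * ?\<alpha>\<^sup>2 * ?q x * ?q y"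
    unfolding poisson_jacobi_Suc_Suc_next[OF assms(1) p_commute] L_def by (simp add: field_simps)
  also have "\<dots> = - (jacobi_charpoly s (Suc (Suc m)) a b x * jacobi_charpoly (Suc s) (Suc m) a b y
         - jacobi_charpoly s (Suc (Suc m)) a b y * jacobi_charpoly (Suc s) (Suc m) a b x)
      + (x - y) * jacobi_charpoly (Suc s) (Suc m) a b x * jacobi_charpoly (Suc s) (Suc m) a b y"
    unfolding pq_mixed[of y x, folded L_def] jacobi_charpoly_Suc_Suc by (simp add: algebra_simps)
  finally show ?thesis .
qed

lemma poisson_jacobi_commute_step:
  assumes "Suc s < N"
    and p_commute: "\<And>x y. poisson N (jacobi_fun (Suc s) (Suc m) x) (jacobi_fun (Suc s) (Suc m) y) a b = 0"
    and q_commute: "\<And>x y. poisson N (jacobi_fun (Suc (Suc s)) m x) (jacobi_fun (Suc (Suc s)) m y) a b = 0"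
    and pq_mixed: "\<And>x y. 2 * (x - y) * poisson N (jacobi_fun (Suc s) (Suc m) x) (jacobi_fun (Suc (Suc s)) m y) a b =
      - (jacobi_charpoly (Suc s) (Suc m) a b x * jacobi_charpoly (Suc (Suc s)) m a b y
         - jacobi_charpoly (Suc s) (Suc m) a b y * jacobi_charpoly (Suc (Suc s)) m a b x)
      + (x - y) * jacobi_charpoly (Suc (Suc s)) m a b x * jacobi_charpoly (Suc (Suc s)) m a b y"
  shows "poisson N (jacobi_fun s (Suc (Suc m)) x) (jacobi_fun s (Suc (Suc m)) y) a b = 0"
proof (cases "x = y")
  case True
  then show ?thesis by (simp add: poisson_self)
next
  case False
  let ?P = "jacobi_fun s (Suc (Suc m))" and ?p = "jacobi_fun (Suc s) (Suc m)"
    and ?q = "jacobi_fun (Suc (Suc s)) m"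
  let ?A = "\<lambda>a b. a (Suc s)" and ?B = "\<lambda>a b. b (Suc s)"
  define L where "L = poisson N (?p x) (?q y) a b"
  have L_sym: "poisson N (?p y) (?q x) a b = L"
  proof -
    have "2 * (x - y) * (L - poisson N (?p y) (?q x) a b) = 0"
      using pq_mixed[of x y] pq_mixed[of y x] unfolding L_def by (simp add: algebra_simps)
    then show ?thesis using False by simp
  qed
  have Py_q: "poisson N (?P y) (?q x) a b = (y - b (Suc s)) * L"
    using assms(1) q_commute L_sym
    by (simp add: poisson_jacobi_Suc_Suc_left poisson_coord_b_jacobi poisson_coord_a_jacobi)
  have "poisson N (?P x) (?P y) a b =
      - (x - b (Suc s)) * poisson N (?P y) (?p x) a b + ?p x a b * poisson N (?P y) ?B a b
      + (a (Suc s))\<^sup>2 * poisson N (?P y) (?q x) a b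
      + 2 * a (Suc s) * ?q x a b * poisson N (?P y) ?A a b"
    using poisson_jacobi_Suc_Suc_left[of N s m x "?P y" a b]
      poisson_antisym[of N "?p x" "?P y" a b] poisson_antisym[of N ?B "?P y" a b]
      poisson_antisym[of N "?q x" "?P y" a b] poisson_antisym[of N ?A "?P y" a b]
    by (simp add: algebra_simps)
  also have "\<dots> = - ((a (Suc s))\<^sup>2 / 2) * (2 * (x - y) * L
      - (- (?p x a b * ?q y a b - ?p y a b * ?q x a b) + (x - y) * ?q x a b * ?q y a b))"
    unfolding poisson_jacobi_Suc_Suc_next[OF assms(1) p_commute] L_def[symmetric] Py_q
      poisson_jacobi_Suc_Suc_coord_b[OF assms(1)] poisson_jacobi_Suc_Suc_coord_a[OF assms(1)]
    by (simp add: field_simps power2_eq_square)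
  also have "\<dots> = 0"
    unfolding L_def pq_mixed by simp
  finally show ?thesis .
qed

lemma poisson_jacobi_brackets:
  assumes "s + m \<le> N"
  shows "poisson N (jacobi_fun s m x) (jacobi_fun s m y) a b = 0 \<and>
    (0 < m \<longrightarrow> 2 * (x - y) * poisson N (jacobi_fun s m x) (jacobi_fun (Suc s) (m - 1) y) a b =
      - (jacobi_charpoly s m a b x * jacobi_charpoly (Suc s) (m - 1) a b y
         - jacobi_charpoly s m a b y * jacobi_charpoly (Suc s) (m - 1) a b x)
      + (x - y) * jacobi_charpoly (Suc s) (m - 1) a b x * jacobi_charpoly (Suc s) (m - 1) a b y)"
  using assms
proof (induction m arbitrary: s x y rule: induct_nat_012)
  case 0
  show ?case by (simp add: jacobi_charpoly_0 poisson_const_left)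
next
  case 1
  let ?B = "\<lambda>a b. b (Suc s)"
  have "poisson N (\<lambda>a b. y - b (Suc s)) ?B a b = 0"
    by (simp add: poisson_diff_left poisson_const_left poisson_self partially_differentiable_const
        partially_differentiable_coord_b)
  moreover have "poisson N (\<lambda>a b. 1) (\<lambda>a b. x - b (Suc s)) a b = 0"
    by (rule poisson_const_left)
  ultimately show ?case
    using poisson_antisym[of N ?B "\<lambda>a b. y - b (Suc s)" a b]
      poisson_antisym[of N "\<lambda>a b. x - b (Suc s)" "\<lambda>a b. 1" a b]
    by (simp add: jacobi_charpoly_0 jacobi_charpoly_1 poisson_diff_left poisson_const_left
        partially_differentiable_const partially_differentiable_coord_b algebra_simps)
next
  case (ge2 m)
  have j: "Suc s < N"
    using ge2.prems by simp
  let ?p = "jacobi_fun (Suc s) (Suc m)" and ?q = "jacobi_fun (Suc (Suc s)) m"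
  have p_brackets: "poisson N (?p x) (?p y) a b = 0 \<and>
      2 * (x - y) * poisson N (?p x) (?q y) a b =
      - (?p x a b * ?q y a b - ?p y a b * ?q x a b) + (x - y) * ?q x a b * ?q y a b" for x y
    using ge2.IH(2)[of "Suc s" x y] ge2.prems by simp
  have q_commute: "poisson N (?q x) (?q y) a b = 0" for x y
    using ge2.IH(1)[of "Suc (Suc s)" x y] ge2.prems by simp
  have "poisson N (jacobi_fun s (Suc (Suc m)) x) (jacobi_fun s (Suc (Suc m)) y) a b = 0"
    using p_brackets q_commute by (intro poisson_jacobi_commute_step[OF j]) blast+
  moreover have "2 * (x - y) * poisson N (jacobi_fun s (Suc (Suc m)) x) (?p y) a b =
      - (jacobi_charpoly s (Suc (Suc m)) a b x * ?p y a b - jacobi_charpoly s (Suc (Suc m)) a b y * ?p x a b)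
      + (x - y) * ?p x a b * ?p y a b"
    using p_brackets by (intro poisson_jacobi_mixed_step[OF j]) blast+
  ultimately show ?case by simp
qed

theorem theorem2p4:
  fixes N n :: nat and c x y :: real and a b :: "nat \<Rightarrow> real"
  assumes "N \<ge> 1"
    and "\<forall>k\<in>{1..N-1}. a k > 0"
    and "(\<Sum>j=1..N. b j) = c"
    and "1 \<le> n" and "n \<le> N"
  shows "poisson N (\<lambda>a b. P_poly n a b x) (\<lambda>a b. P_poly n a b y) a b = 0
     \<and> poisson N (\<lambda>a b. Q_poly n a b x) (\<lambda>a b. Q_poly n a b y) a b = 0
     \<and> (x \<noteq> y \<longrightarrow>
          2 * poisson N (\<lambda>a b. P_poly n a b x) (\<lambda>a b. Q_poly n a b y) a b =
            - (P_poly n a b x * Q_poly n a b y - P_poly n a b y * Q_poly n a b x) / (x - y)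
            + Q_poly n a b x * Q_poly n a b y)"
proof -
  have P_brackets: "poisson N (jacobi_fun 0 n x) (jacobi_fun 0 n y) a b = 0 \<and>
      2 * (x - y) * poisson N (jacobi_fun 0 n x) (jacobi_fun 1 (n - 1) y) a b =
      - (jacobi_charpoly 0 n a b x * jacobi_charpoly 1 (n - 1) a b y
         - jacobi_charpoly 0 n a b y * jacobi_charpoly 1 (n - 1) a b x)
      + (x - y) * jacobi_charpoly 1 (n - 1) a b x * jacobi_charpoly 1 (n - 1) a b y"
    using poisson_jacobi_brackets[of 0 n N x y a b] assms(4,5) by simp
  have Q_commute: "poisson N (jacobi_fun 1 (n - 1) x) (jacobi_fun 1 (n - 1) y) a b = 0"
    using poisson_jacobi_brackets[of 1 "n - 1" N x y a b] assms(4,5) by simp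
  show ?thesis
    unfolding P_poly_def Q_poly_def
    using P_brackets Q_commute by (simp add: field_simps)
qed

end
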